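(* No monoid admitting a non-trivial idempotent (an element $e$ with $e^2=e\neq 1_M$) is strongly sofic.
   Context: Hamming metric on $\operatorname{Map}(D)$ (monoid of maps $D\to D$, $D$ finite non-empty): $d_D^{\mathrm{Ham}}(f,g)=\frac{1}{|D|}|\{v:f(v)\ne g(v)\}|$. A monoid $M$ is strongly sofic if for every finite $K\subset M$ there is an integer $\Delta_K\ge1$ such that for every $\varepsilon>0$ there exist a non-empty finite set $D$ and a map $\sigma\colon M\to\operatorname{Map}(D)$ with (1) $\sigma(1_M)=\mathrm{Id}_D$; (2) $d_D^{\mathrm{Ham}}(\sigma(k_1k_2),\sigma(k_1)\sigma(k_2))\le\varepsilon$ for $k_1,k_2\in K$; (3) $d_D^{\mathrm{Ham}}(\sigma(k_1),\sigma(k_2))\ge1-\varepsilon$ for distinct $k_1,k_2\in K$; (4) $|\sigma(k)^{-1}(v)|\le\Delta_K$ for $k\in K$, $v\in D$. *)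

theory Defs
  imports Complex_Main
begin

text \<open>Normalized Hamming distance on maps D -> D (maps represented as functions
  nat => nat, only their values on the finite set D matter).\<close>
definition ham_dist :: "nat set \<Rightarrow> (nat \<Rightarrow> nat) \<Rightarrow> (nat \<Rightarrow> nat) \<Rightarrow> real" where
  "ham_dist D f g = real (card {v \<in> D. f v \<noteq> g v}) / real (card D)"

definition strongly_sofic :: "'a::monoid_mult itself \<Rightarrow> bool" where
  "strongly_sofic _ \<longleftrightarrow>
    (\<forall>K :: 'a set. finite K \<longrightarrow>
      (\<exists>\<Delta> :: nat. \<Delta> \<ge> 1 \<and>
        (\<forall>\<epsilon> :: real. \<epsilon> > 0 \<longrightarrow>
          (\<exists>(D :: nat set) (\<sigma> :: 'a \<Rightarrow> nat \<Rightarrow> nat).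
             finite D \<and> D \<noteq> {} \<and>
             (\<forall>m. \<forall>v\<in>D. \<sigma> m v \<in> D) \<and>
             (\<forall>v\<in>D. \<sigma> 1 v = v) \<and>
             (\<forall>k1\<in>K. \<forall>k2\<in>K. ham_dist D (\<sigma> (k1 * k2)) (\<sigma> k1 \<circ> \<sigma> k2) \<le> \<epsilon>) \<and>
             (\<forall>k1\<in>K. \<forall>k2\<in>K. k1 \<noteq> k2 \<longrightarrow> ham_dist D (\<sigma> k1) (\<sigma> k2) \<ge> 1 - \<epsilon>) \<and>
             (\<forall>k\<in>K. \<forall>v\<in>D. card {w \<in> D. \<sigma> k w = v} \<le> \<Delta>)))))"

end

theory Submission
  imports Defs
begin

text \<open>Let \<open>f = \<sigma> e\<close> on a set \<open>D\<close> of \<open>n\<close> points. Since \<open>f\<close> almost agrees with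
  \<open>f \<circ> f\<close>, for all but \<open>\<epsilon> n\<close> points \<open>v\<close> the image \<open>f v\<close> is a fixed point of \<open>f\<close>.
  Since \<open>f\<close> is almost everywhere different from \<open>\<sigma> 1 = id\<close>, it has at most \<open>\<epsilon> n\<close>
  fixed points, and as its fibres have at most \<open>\<Delta>\<close> elements, at most \<open>\<Delta> \<epsilon> n\<close> points
  are mapped to fixed points. Hence \<open>1 - \<epsilon> \<le> \<Delta> \<epsilon>\<close>, which fails for small \<open>\<epsilon>\<close>.\<close>

lemma ham_dist_cong:
  assumes "\<forall>v\<in>D. f v = f' v" and "\<forall>v\<in>D. g v = g' v"
  shows "ham_dist D f g = ham_dist D f' g'"
  unfolding ham_dist_def using assms by (metis (mono_tags, lifting) Collect_cong)

lemma card_agreement_set: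
  assumes "finite D" and "D \<noteq> {}"
  shows "real (card {v\<in>D. f v = g v}) = (1 - ham_dist D f g) * real (card D)"
proof -
  have "card {v\<in>D. f v = g v} + card {v\<in>D. f v \<noteq> g v} = card D"
    using assms(1) by (subst card_Un_disjoint[symmetric]) (auto intro: arg_cong[where f = card])
  moreover have "real (card D) > 0"
    using assms by (simp add: card_gt_0_iff)
  ultimately show ?thesis
    unfolding ham_dist_def by (simp add: algebra_simps flip: of_nat_add)
qed

lemma card_preimage_le_fibre_bound:
  assumes "finite D" and "finite W" and "\<forall>w\<in>W. card {v\<in>D. f v = w} \<le> \<Delta>"
  shows "card {v\<in>D. f v \<in> W} \<le> \<Delta> * card W"
proof -
  have "{v\<in>D. f v \<in> W} = (\<Union>w\<in>W. {v\<in>D. f v = w})"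
    by auto
  then have "card {v\<in>D. f v \<in> W} \<le> (\<Sum>w\<in>W. card {v\<in>D. f v = w})"
    using card_UN_le[OF assms(2)] by simp
  also have "\<dots> \<le> (\<Sum>w\<in>W. \<Delta>)"
    using assms(3) by (intro sum_mono) simp
  finally show ?thesis
    by (simp add: mult.commute)
qed

lemma almost_idempotent_far_from_id:
  fixes f :: "nat \<Rightarrow> nat"
  assumes D: "finite D" "D \<noteq> {}" and maps_to: "\<forall>v\<in>D. f v \<in> D"
    and fibres: "\<forall>w\<in>D. card {v\<in>D. f v = w} \<le> \<Delta>"
    and almost_idempotent: "ham_dist D f (f \<circ> f) \<le> \<epsilon>"
    and far_from_id: "1 - \<epsilon> \<le> ham_dist D id f"
  shows "1 - \<epsilon> \<le> \<Delta> * \<epsilon>"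
proof -
  define n where "n = real (card D)"
  define Fix where "Fix = {v\<in>D. id v = f v}"
  have n_pos: "n > 0"
    using D by (simp add: n_def card_gt_0_iff)
  have "(1 - \<epsilon>) * n \<le> real (card {v\<in>D. f v = (f \<circ> f) v})"
    using card_agreement_set[OF D, of f "f \<circ> f"] almost_idempotent n_pos
    by (simp add: n_def mult_right_mono)
  also have "{v\<in>D. f v = (f \<circ> f) v} = {v\<in>D. f v \<in> Fix}"
    using maps_to by (auto simp: Fix_def)
  also have "real (card {v\<in>D. f v \<in> Fix}) \<le> \<Delta> * real (card Fix)"
    using card_preimage_le_fibre_bound[of D Fix f \<Delta>] D fibres
    by (auto simp: Fix_def simp flip: of_nat_mult)
  also have "real (card Fix) \<le> \<epsilon> * n"
    using card_agreement_set[OF D, of id f] far_from_id n_pos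
    by (simp add: Fix_def n_def mult_right_mono)
  finally have "(1 - \<epsilon>) * n \<le> (\<Delta> * \<epsilon>) * n"
    by (simp add: mult_left_mono mult.assoc)
  then show ?thesis
    using n_pos by simp
qed

lemma strongly_sofic_idempotent_models:
  fixes e :: "'a::monoid_mult"
  assumes "strongly_sofic TYPE('a)" and "e * e = e" and "e \<noteq> 1"
  obtains \<Delta> :: nat where
    "\<And>\<epsilon>. \<epsilon> > 0 \<Longrightarrow> \<exists>D (f :: nat \<Rightarrow> nat). finite D \<and> D \<noteq> {} \<and> (\<forall>v\<in>D. f v \<in> D) \<and>
       (\<forall>w\<in>D. card {v\<in>D. f v = w} \<le> \<Delta>) \<and>
       ham_dist D f (f \<circ> f) \<le> \<epsilon> \<and> 1 - \<epsilon> \<le> ham_dist D id f"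
proof -
  have "finite {1, e}"
    by simp
  from assms(1)[unfolded strongly_sofic_def, rule_format, OF this]
  obtain \<Delta> :: nat where models: "\<forall>\<epsilon> :: real. \<epsilon> > 0 \<longrightarrow> (\<exists>D (\<sigma> :: 'a \<Rightarrow> nat \<Rightarrow> nat).
      finite D \<and> D \<noteq> {} \<and> (\<forall>m. \<forall>v\<in>D. \<sigma> m v \<in> D) \<and> (\<forall>v\<in>D. \<sigma> 1 v = v) \<and>
      (\<forall>k1\<in>{1, e}. \<forall>k2\<in>{1, e}. ham_dist D (\<sigma> (k1 * k2)) (\<sigma> k1 \<circ> \<sigma> k2) \<le> \<epsilon>) \<and>
      (\<forall>k1\<in>{1, e}. \<forall>k2\<in>{1, e}. k1 \<noteq> k2 \<longrightarrow> ham_dist D (\<sigma> k1) (\<sigma> k2) \<ge> 1 - \<epsilon>) \<and>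
      (\<forall>k\<in>{1, e}. \<forall>v\<in>D. card {w\<in>D. \<sigma> k w = v} \<le> \<Delta>))"
    by (elim exE conjE) blast
  show thesis
  proof (rule that)
    fix \<epsilon> :: real
    assume "\<epsilon> > 0"
    then obtain D and \<sigma> :: "'a \<Rightarrow> nat \<Rightarrow> nat" where
      D: "finite D" "D \<noteq> {}" and maps_to: "\<forall>m. \<forall>v\<in>D. \<sigma> m v \<in> D"
      and unit: "\<forall>v\<in>D. \<sigma> 1 v = v"
      and hom: "\<forall>k1\<in>{1, e}. \<forall>k2\<in>{1, e}. ham_dist D (\<sigma> (k1 * k2)) (\<sigma> k1 \<circ> \<sigma> k2) \<le> \<epsilon>"
      and sep: "\<forall>k1\<in>{1, e}. \<forall>k2\<in>{1, e}. k1 \<noteq> k2 \<longrightarrow> ham_dist D (\<sigma> k1) (\<sigma> k2) \<ge> 1 - \<epsilon>"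
      and fibres: "\<forall>k\<in>{1, e}. \<forall>v\<in>D. card {w\<in>D. \<sigma> k w = v} \<le> \<Delta>"
      using models by (elim allE[of _ \<epsilon>] impE exE conjE) blast
    have "ham_dist D (\<sigma> e) (\<sigma> e \<circ> \<sigma> e) \<le> \<epsilon>"
      using hom assms(2) by force
    moreover have "1 - \<epsilon> \<le> ham_dist D id (\<sigma> e)"
      using sep assms(3) ham_dist_cong[of D "\<sigma> 1" id "\<sigma> e" "\<sigma> e"] unit by force
    ultimately show "\<exists>D (f :: nat \<Rightarrow> nat). finite D \<and> D \<noteq> {} \<and> (\<forall>v\<in>D. f v \<in> D) \<and>
       (\<forall>w\<in>D. card {v\<in>D. f v = w} \<le> \<Delta>) \<and>
       ham_dist D f (f \<circ> f) \<le> \<epsilon> \<and> 1 - \<epsilon> \<le> ham_dist D id f"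
      using D maps_to fibres by (intro exI[of _ D] exI[of _ "\<sigma> e"]) auto
  qed
qed

theorem proposition3p14:
  fixes e :: "'a::monoid_mult"
  assumes "e * e = e" and "e \<noteq> 1"
  shows "\<not> strongly_sofic TYPE('a)"
proof
  assume "strongly_sofic TYPE('a)"
  then obtain \<Delta> :: nat where models: "\<And>\<epsilon>. \<epsilon> > 0 \<Longrightarrow> \<exists>D (f :: nat \<Rightarrow> nat).
       finite D \<and> D \<noteq> {} \<and> (\<forall>v\<in>D. f v \<in> D) \<and> (\<forall>w\<in>D. card {v\<in>D. f v = w} \<le> \<Delta>) \<and>
       ham_dist D f (f \<circ> f) \<le> \<epsilon> \<and> 1 - \<epsilon> \<le> ham_dist D id f"
    using strongly_sofic_idempotent_models assms by blast
  define \<epsilon> :: real where "\<epsilon> = 1 / (\<Delta> + 2)"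
  have "\<epsilon> > 0"
    by (simp add: \<epsilon>_def)
  then have "1 - \<epsilon> \<le> \<Delta> * \<epsilon>"
    using models almost_idempotent_far_from_id by blast
  moreover have "\<Delta> * \<epsilon> < 1 - \<epsilon>"
    by (simp add: \<epsilon>_def field_simps)
  ultimately show False
    by linarith
qed

end
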